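(* Let $(M,J)$ be a closed almost complex manifold. Then $J$ is $C^{\infty}$ pure if and only if $\pi^{1,1}\mathbf B\cap\mathbf Z^{1,1}=\mathbf B^{1,1}$, and this condition is equivalent to $\pi^{(2,0),(0,2)}\mathbf B\cap\mathbf Z^{(2,0),(0,2)}=\mathbf B^{(2,0),(0,2)}$. Consequently, $J$ being $C^{\infty}$ pure is equivalent to $\iota^{1,1}$ being injective, which is also equivalent to $\iota^{(2,0),(0,2)}$ being injective.
   Context: Real 2-forms split as $J$-invariant ($\alpha(Jv,Jw)=\alpha(v,w)$, the space $\Omega^{1,1}$) plus $J$-anti-invariant ($\alpha(Jv,Jw)=-\alpha(v,w)$, the space $\Omega^{(2,0),(0,2)}$), with projections $\pi^{1,1},\pi^{(2,0),(0,2)}$. $\mathbf Z,\mathbf B$ are the closed and exact real 2-forms; for $S=(1,1)$ or $(2,0),(0,2)$, $\mathbf Z^S=\mathbf Z\cap\Omega^S$, $\mathbf B^S=\mathbf B\cap\Omega^S$. $\iota^{S}:\mathbf Z^S/\mathbf B^S\to\pi^S\mathbf Z/\pi^S\mathbf B$ is the homomorphism induced by inclusion. $H_J^{S}(M)_{\mathbb R}=\mathbf Z^S/\mathbf B^S$, viewed as a subspace of $H^2(M;\mathbb R)$. $J$ is $C^\infty$ pure if $H_J^{1,1}(M)_{\mathbb R}\cap H_J^{(2,0),(0,2)}(M)_{\mathbb R}=0$ in $H^2(M;\mathbb R)$. *)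

theory Defs
  imports Complex_Main
begin

text \<open>The type 'v plays the role of the real vector space of real 2-forms
Omega^2(M); Jt is the induced action  alpha |-> alpha(J.,J.)  (a linear involution);
Z and B are the subspaces of closed and exact 2-forms (B is contained in Z).\<close>

definition Omega11 :: "('v::real_vector \<Rightarrow> 'v) \<Rightarrow> 'v set" where
  "Omega11 Jt = {a. Jt a = a}"

definition OmegaA :: "('v::real_vector \<Rightarrow> 'v) \<Rightarrow> 'v set" where
  "OmegaA Jt = {a. Jt a = - a}"

definition pi11 :: "('v::real_vector \<Rightarrow> 'v) \<Rightarrow> 'v \<Rightarrow> 'v" where
  "pi11 Jt a = (1/2) *\<^sub>R (a + Jt a)"

definition piA :: "('v::real_vector \<Rightarrow> 'v) \<Rightarrow> 'v \<Rightarrow> 'v" where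
  "piA Jt a = (1/2) *\<^sub>R (a - Jt a)"

definition coset :: "'v::real_vector set \<Rightarrow> 'v \<Rightarrow> 'v set" where
  "coset W a = (\<lambda>x. a + x) ` W"

text \<open>H_J^S(M)_R viewed inside H^2 = Z/B: classes of closed forms of type S.\<close>
definition HJ :: "'v::real_vector set \<Rightarrow> 'v set \<Rightarrow> 'v set \<Rightarrow> 'v set set" where
  "HJ OmS Z B = coset B ` (Z \<inter> OmS)"

text \<open>C^infty purity: H^{1,1} \<inter> H^{(2,0),(0,2)} = 0 in H^2 = Z/B (0 is the class B).\<close>
definition C_inf_pure :: "('v::real_vector \<Rightarrow> 'v) \<Rightarrow> 'v set \<Rightarrow> 'v set \<Rightarrow> bool" where
  "C_inf_pure Jt Z B \<longleftrightarrow> HJ (Omega11 Jt) Z B \<inter> HJ (OmegaA Jt) Z B \<subseteq> {coset B 0}"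

text \<open>Injectivity of iota^S : Z^S/B^S \<rightarrow> pi^S Z / pi^S B, [a] \<mapsto> [a].\<close>
definition iota_injective ::
  "'v::real_vector set \<Rightarrow> ('v \<Rightarrow> 'v) \<Rightarrow> 'v set \<Rightarrow> 'v set \<Rightarrow> bool" where
  "iota_injective OmS piS Z B \<longleftrightarrow>
     (\<forall>a\<in>Z \<inter> OmS. \<forall>a'\<in>Z \<inter> OmS.
        coset (piS ` B) a = coset (piS ` B) a' \<longrightarrow> coset (B \<inter> OmS) a = coset (B \<inter> OmS) a')"

end

theory Submission
  imports Defs
begin

text \<open>Purity says: a closed J-invariant form cohomologous to a closed J-anti-invariant
one is exact.  If a = pi11 beta is closed, J-invariant and beta is exact, then
a - beta is closed and J-anti-invariant, so purity makes a exact; conversely, if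
a - b is exact with a invariant and b anti-invariant, then a = pi11 (a - b).  This
identifies purity with pi11 B \<inter> Z11 = B11, and injectivity of iota11 is the same
condition read in the quotient.  Replacing J by -J swaps the two types, which
gives the statements for (2,0),(0,2).\<close>

lemma coset_eq_iff:
  assumes "subspace W"
  shows "coset W a = coset W b \<longleftrightarrow> a - b \<in> W"
proof
  assume "coset W a = coset W b"
  moreover have "a \<in> coset W a"
    unfolding coset_def using subspace_0[OF assms] by force
  ultimately obtain w where "w \<in> W" "a = b + w"
    unfolding coset_def by auto
  then show "a - b \<in> W" by simp
next
  assume ab: "a - b \<in> W"
  show "coset W a = coset W b"
  proof (unfold coset_def, safe)
    fix x assume "x \<in> W"
    then have "(a - b) + x \<in> W" "x - (a - b) \<in> W"
      using ab subspace_add[OF assms] subspace_diff[OF assms] by blast+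
    moreover have "a + x = b + ((a - b) + x)" "b + x = a + (x - (a - b))" by simp_all
    ultimately show "a + x \<in> (+) b ` W" "b + x \<in> (+) a ` W" by blast+
  qed
qed

lemma subspace_Omega11: "linear Jt \<Longrightarrow> subspace (Omega11 Jt)"
proof -
  assume "linear Jt"
  then have "subspace {a. Jt a - id a = 0}"
    by (intro linear_subspace_kernel linear_compose_sub linear_id)
  then show ?thesis unfolding Omega11_def by simp
qed

lemma linear_pi11: "linear Jt \<Longrightarrow> linear (pi11 Jt)"
  unfolding pi11_def
  by (intro linear_compose_scale_right linear_compose_add linear_id [unfolded id_def])

lemma pi11_Omega11: "a \<in> Omega11 Jt \<Longrightarrow> pi11 Jt a = a"
  unfolding Omega11_def pi11_def by (simp add: scaleR_half_double)

lemma pi11_OmegaA: "b \<in> OmegaA Jt \<Longrightarrow> pi11 Jt b = 0"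
  unfolding OmegaA_def pi11_def by simp

lemma pi11_minus_OmegaA:
  assumes "linear Jt" and "\<And>a. Jt (Jt a) = a"
  shows "pi11 Jt a - a \<in> OmegaA Jt"
proof -
  have "pi11 Jt a - a = (1/2) *\<^sub>R (Jt a - a)"
    unfolding pi11_def by (simp add: algebra_simps) (metis scaleR_add_right scaleR_half_double)
  then show ?thesis
    unfolding OmegaA_def
    by (simp add: linear_scale[OF assms(1)] linear_diff[OF assms(1)] assms(2)
        flip: scaleR_minus_right)
qed

lemma Omega11_uminus: "Omega11 (\<lambda>a. - Jt a) = OmegaA Jt"
  unfolding Omega11_def OmegaA_def by (auto simp: minus_equation_iff)

lemma OmegaA_uminus: "OmegaA (\<lambda>a. - Jt a) = Omega11 Jt"
  unfolding Omega11_def OmegaA_def by simp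

lemma pi11_uminus: "pi11 (\<lambda>a. - Jt a) = piA Jt"
  unfolding pi11_def piA_def by (simp add: fun_eq_iff)

lemma C_inf_pure_uminus: "C_inf_pure (\<lambda>a. - Jt a) Z B = C_inf_pure Jt Z B"
  unfolding C_inf_pure_def Omega11_uminus OmegaA_uminus by (simp add: Int_commute)

lemma C_inf_pure_iff:
  assumes "subspace B"
  shows "C_inf_pure Jt Z B \<longleftrightarrow>
    (\<forall>a\<in>Z \<inter> Omega11 Jt. \<forall>b\<in>Z \<inter> OmegaA Jt. a - b \<in> B \<longrightarrow> a \<in> B)"
proof
  assume pure: "C_inf_pure Jt Z B"
  show "\<forall>a\<in>Z \<inter> Omega11 Jt. \<forall>b\<in>Z \<inter> OmegaA Jt. a - b \<in> B \<longrightarrow> a \<in> B"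
  proof (intro ballI impI)
    fix a b assume "a \<in> Z \<inter> Omega11 Jt" "b \<in> Z \<inter> OmegaA Jt" "a - b \<in> B"
    then have "coset B a \<in> HJ (Omega11 Jt) Z B \<inter> HJ (OmegaA Jt) Z B"
      unfolding HJ_def coset_eq_iff[OF assms, symmetric] by auto
    then have "coset B a = coset B 0" using pure unfolding C_inf_pure_def by blast
    then show "a \<in> B" by (simp add: coset_eq_iff[OF assms])
  qed
next
  assume closed: "\<forall>a\<in>Z \<inter> Omega11 Jt. \<forall>b\<in>Z \<inter> OmegaA Jt. a - b \<in> B \<longrightarrow> a \<in> B"
  show "C_inf_pure Jt Z B"
    unfolding C_inf_pure_def
  proof
    fix X assume "X \<in> HJ (Omega11 Jt) Z B \<inter> HJ (OmegaA Jt) Z B"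
    then obtain a b where "a \<in> Z \<inter> Omega11 Jt" "b \<in> Z \<inter> OmegaA Jt"
      and "X = coset B a" "X = coset B b"
      unfolding HJ_def by blast
    moreover from this have "a - b \<in> B" using coset_eq_iff[OF assms, of a b] by simp
    ultimately have "a \<in> B" using closed by blast
    then show "X \<in> {coset B 0}" using \<open>X = coset B a\<close> by (simp add: coset_eq_iff[OF assms])
  qed
qed

lemma C_inf_pure_iff_pi11_image:
  assumes lin: "linear Jt" and inv: "\<And>a. Jt (Jt a) = a"
    and "subspace Z" and "subspace B" and "B \<subseteq> Z"
  shows "C_inf_pure Jt Z B \<longleftrightarrow> pi11 Jt ` B \<inter> (Z \<inter> Omega11 Jt) = B \<inter> Omega11 Jt"
  unfolding C_inf_pure_iff[OF \<open>subspace B\<close>]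
proof (intro iffI ballI impI equalityI subsetI)
  fix x
  assume pure: "\<forall>a\<in>Z \<inter> Omega11 Jt. \<forall>b\<in>Z \<inter> OmegaA Jt. a - b \<in> B \<longrightarrow> a \<in> B"
    and x: "x \<in> pi11 Jt ` B \<inter> (Z \<inter> Omega11 Jt)"
  then obtain \<beta> where "\<beta> \<in> B" "x = pi11 Jt \<beta>" by auto
  moreover from this have "x - \<beta> \<in> Z"
    using x \<open>B \<subseteq> Z\<close> subspace_diff[OF \<open>subspace Z\<close>] by blast
  ultimately have "x - \<beta> \<in> Z \<inter> OmegaA Jt"
    using pi11_minus_OmegaA[OF lin inv] by blast
  then have "x \<in> B" using pure x \<open>\<beta> \<in> B\<close> by force
  with x show "x \<in> B \<inter> Omega11 Jt" by blast
next
  fix x assume "x \<in> B \<inter> Omega11 Jt"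
  then show "x \<in> pi11 Jt ` B \<inter> (Z \<inter> Omega11 Jt)"
    using pi11_Omega11[of x Jt] \<open>B \<subseteq> Z\<close> by (auto intro: image_eqI[where x=x])
next
  fix a b
  assume image: "pi11 Jt ` B \<inter> (Z \<inter> Omega11 Jt) = B \<inter> Omega11 Jt"
    and a: "a \<in> Z \<inter> Omega11 Jt" and b: "b \<in> Z \<inter> OmegaA Jt" and ab: "a - b \<in> B"
  have "pi11 Jt (a - b) = a"
    using a b by (simp add: linear_diff[OF linear_pi11[OF lin]] pi11_Omega11 pi11_OmegaA)
  then have "a \<in> pi11 Jt ` B" using ab by (metis image_eqI)
  then show "a \<in> B" using image a by blast
qed

lemma iota_injective_iff:
  assumes "subspace Z" and "subspace B" and "subspace OmS" and "B \<subseteq> Z"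
    and "linear piS" and "\<And>a. a \<in> OmS \<Longrightarrow> piS a = a"
  shows "iota_injective OmS piS Z B \<longleftrightarrow> piS ` B \<inter> (Z \<inter> OmS) = B \<inter> OmS"
proof -
  have piB: "subspace (piS ` B)"
    using assms(2,5) by (rule linear_subspace_image[rotated])
  have BS: "subspace (B \<inter> OmS)"
    using assms(2,3) by (rule subspace_inter)
  have ZS: "subspace (Z \<inter> OmS)"
    using assms(1,3) by (rule subspace_inter)
  have "B \<inter> OmS \<subseteq> piS ` B \<inter> (Z \<inter> OmS)"
  proof
    fix x assume "x \<in> B \<inter> OmS"
    then show "x \<in> piS ` B \<inter> (Z \<inter> OmS)"
      using assms(4) assms(6)[of x] by (auto intro: rev_image_eqI)
  qed
  moreover have "iota_injective OmS piS Z B \<longleftrightarrow>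
      (\<forall>x\<in>Z \<inter> OmS. x \<in> piS ` B \<longrightarrow> x \<in> B \<inter> OmS)"
    unfolding iota_injective_def coset_eq_iff[OF piB] coset_eq_iff[OF BS]
    using subspace_0[OF ZS] subspace_diff[OF ZS] by (metis diff_zero)
  ultimately show ?thesis by blast
qed

lemma iota_injective_Omega11_iff:
  assumes "linear Jt" and "subspace Z" and "subspace B" and "B \<subseteq> Z"
  shows "iota_injective (Omega11 Jt) (pi11 Jt) Z B
    \<longleftrightarrow> pi11 Jt ` B \<inter> (Z \<inter> Omega11 Jt) = B \<inter> Omega11 Jt"
  using assms by (intro iota_injective_iff subspace_Omega11 linear_pi11 pi11_Omega11)

theorem lemma2p9:
  fixes Jt :: "'v::real_vector \<Rightarrow> 'v" and Z B :: "'v set"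
  assumes "linear Jt" and "\<And>a. Jt (Jt a) = a"
    and "subspace Z" and "subspace B" and "B \<subseteq> Z"
  shows "(C_inf_pure Jt Z B \<longleftrightarrow> pi11 Jt ` B \<inter> (Z \<inter> Omega11 Jt) = B \<inter> Omega11 Jt)
       \<and> (pi11 Jt ` B \<inter> (Z \<inter> Omega11 Jt) = B \<inter> Omega11 Jt
            \<longleftrightarrow> piA Jt ` B \<inter> (Z \<inter> OmegaA Jt) = B \<inter> OmegaA Jt)
       \<and> (C_inf_pure Jt Z B \<longleftrightarrow> iota_injective (Omega11 Jt) (pi11 Jt) Z B)
       \<and> (iota_injective (Omega11 Jt) (pi11 Jt) Z B \<longleftrightarrow> iota_injective (OmegaA Jt) (piA Jt) Z B)"
proof -
  have lin': "linear (\<lambda>a. - Jt a)" and inv': "\<And>a. - Jt (- Jt a) = a"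
    using assms(1,2) by (simp_all add: linear_compose_neg linear_neg)
  have pure11: "C_inf_pure Jt Z B \<longleftrightarrow> pi11 Jt ` B \<inter> (Z \<inter> Omega11 Jt) = B \<inter> Omega11 Jt"
    using C_inf_pure_iff_pi11_image[OF assms] .
  have pureA: "C_inf_pure Jt Z B \<longleftrightarrow> piA Jt ` B \<inter> (Z \<inter> OmegaA Jt) = B \<inter> OmegaA Jt"
    using C_inf_pure_iff_pi11_image[OF lin' inv' assms(3-5)]
    unfolding C_inf_pure_uminus Omega11_uminus pi11_uminus .
  have iota11: "iota_injective (Omega11 Jt) (pi11 Jt) Z B
      \<longleftrightarrow> pi11 Jt ` B \<inter> (Z \<inter> Omega11 Jt) = B \<inter> Omega11 Jt"
    using iota_injective_Omega11_iff[OF assms(1,3-5)] .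
  have iotaA: "iota_injective (OmegaA Jt) (piA Jt) Z B
      \<longleftrightarrow> piA Jt ` B \<inter> (Z \<inter> OmegaA Jt) = B \<inter> OmegaA Jt"
    using iota_injective_Omega11_iff[OF lin' assms(3-5)]
    unfolding Omega11_uminus pi11_uminus .
  show ?thesis using pure11 pureA iota11 iotaA by blast
qed

end
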